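(* There exists a convenient subspecies $\mathrm{Bool}_{\max}$ of $\mathrm{Bool}$ which is maximal for inclusion: for every convenient subspecies $\mathrm{Bool}_t$ and every finite set $X$, $\mathrm{Bool}_t(X)\subseteq\mathrm{Bool}_{\max}(X)$.
   Context: A boolean function on a finite set $X$ is a map $f:\mathcal{P}(X)\to\mathbb{Z}$ with $f(\emptyset)=0$; $\mathrm{Bool}(X)$ is their set; $f_{\mid Y}$ is the restriction to $\mathcal{P}(Y)$. For disjoint $X,Y$, $(f\star_1g)(A)=f(A\cap X)+g(A\cap Y)$ (associative, commutative, unit $1\in\mathrm{Bool}(\emptyset)$). For nonempty $X$, $f$ is indecomposable if $f=f'\star_1f''$ with $f'\in\mathrm{Bool}(X\setminus Y)$, $f''\in\mathrm{Bool}(Y)$ forces $Y\in\{\emptyset,X\}$. Each $f$ determines a unique equivalence $\sim_f^i$ with $f=\prod^{\star_1}_{Y\in X/\sim_f^i}f_{\mid Y}$ and each $f_{\mid Y}$ indecomposable; $\mathrm{ic}(f)=|X/\sim_f^i|$. For an equivalence $\sim$ on $X$: $\mathrm{cl}(\sim)=|X/{\sim}|$, $\varpi_\sim$ the canonical surjection, $f/{\sim}(A)=f(\varpi_\sim^{-1}(A))$, $(f\mid\sim)(A)=\sum_{Y\in X/\sim}f(A\cap Y)$. $\mathcal{E}^W(f)=\{\sim:\mathrm{ic}(f\mid\sim)=\mathrm{cl}(\sim)\}$ and $\mathcal{E}^S(f)=\{\sim\in\mathcal{E}^W(f):\mathrm{ic}(f/{\sim})=\mathrm{ic}(f)\}$.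 A convenient subspecies is an assignment $X\mapsto\mathrm{Bool}_t(X)\subseteq\mathrm{Bool}(X)$, stable under bijections ($f\mapsto f\circ\sigma^{-1}$), such that: $1\in\mathrm{Bool}_t(\emptyset)$; $f\star_1g\in\mathrm{Bool}_t(X\sqcup Y)$ for $f\in\mathrm{Bool}_t(X)$, $g\in\mathrm{Bool}_t(Y)$; $f_{\mid Y}\in\mathrm{Bool}_t(Y)$ for $f\in\mathrm{Bool}_t(X)$, $Y\subseteq X$; $f/{\sim}\in\mathrm{Bool}_t(X/{\sim})$ for $f\in\mathrm{Bool}_t(X)$, $\sim\in\mathcal{E}^W(f)$; and $\mathcal{E}^W(f)=\mathcal{E}^S(f)$ for all $f\in\mathrm{Bool}_t(X)$. *)

theory Defs
  imports Main "HOL-Library.Nat_Bijection"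
begin

text \<open>A boolean function
on X is represented by a function nat set => int that vanishes on the empty set and outside Pow X
(extensional convention).\<close>

type_synonym bfun = "nat set \<Rightarrow> int"

definition Bool :: "nat set \<Rightarrow> bfun set" where
  "Bool X = {f. f {} = 0 \<and> (\<forall>A. \<not> A \<subseteq> X \<longrightarrow> f A = 0)}"

definition restr :: "bfun \<Rightarrow> nat set \<Rightarrow> bfun" where
  "restr f Y = (\<lambda>A. if A \<subseteq> Y then f A else 0)"

definition star1 :: "nat set \<Rightarrow> bfun \<Rightarrow> nat set \<Rightarrow> bfun \<Rightarrow> bfun" where
  "star1 X f Y g = (\<lambda>A. if A \<subseteq> X \<union> Y then f (A \<inter> X) + g (A \<inter> Y) else 0)"

definition transport :: "nat set \<Rightarrow> (nat \<Rightarrow> nat) \<Rightarrow> nat set \<Rightarrow> bfun \<Rightarrow> bfun" where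
  "transport X \<sigma> Y f = (\<lambda>B. if B \<subseteq> Y then f {x \<in> X. \<sigma> x \<in> B} else 0)"

definition indecomposable :: "nat set \<Rightarrow> bfun \<Rightarrow> bool" where
  "indecomposable X f \<longleftrightarrow> X \<noteq> {} \<and>
     (\<forall>Y \<subseteq> X. (\<exists>f' \<in> Bool (X - Y). \<exists>f'' \<in> Bool Y. f = star1 (X - Y) f' Y f'')
        \<longrightarrow> Y = {} \<or> Y = X)"

definition ic_rel :: "nat set \<Rightarrow> bfun \<Rightarrow> (nat \<times> nat) set" where
  "ic_rel X f = (THE r. equiv X r \<and> (\<forall>A \<subseteq> X. f A = (\<Sum>Y \<in> X // r. f (A \<inter> Y)))
                    \<and> (\<forall>Y \<in> X // r. indecomposable Y (restr f Y)))"

definition ic :: "nat set \<Rightarrow> bfun \<Rightarrow> nat" where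
  "ic X f = card (X // ic_rel X f)"

definition cl :: "nat set \<Rightarrow> (nat \<times> nat) set \<Rightarrow> nat" where
  "cl X r = card (X // r)"

text \<open>The quotient set X/~, realised inside the universe nat via the canonical injective
encoding of finite sets of naturals (set_encode); varpi is the canonical surjection.\<close>
definition qset :: "nat set \<Rightarrow> (nat \<times> nat) set \<Rightarrow> nat set" where
  "qset X r = set_encode ` (X // r)"

definition varpi :: "(nat \<times> nat) set \<Rightarrow> nat \<Rightarrow> nat" where
  "varpi r x = set_encode (r `` {x})"

definition quot :: "nat set \<Rightarrow> bfun \<Rightarrow> (nat \<times> nat) set \<Rightarrow> bfun" where
  "quot X f r = (\<lambda>A. if A \<subseteq> qset X r then f {x \<in> X. varpi r x \<in> A} else 0)"

definition blockprod :: "nat set \<Rightarrow> bfun \<Rightarrow> (nat \<times> nat) set \<Rightarrow> bfun" where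
  "blockprod X f r = (\<lambda>A. if A \<subseteq> X then (\<Sum>Y \<in> X // r. f (A \<inter> Y)) else 0)"

definition EW :: "nat set \<Rightarrow> bfun \<Rightarrow> (nat \<times> nat) set set" where
  "EW X f = {r. equiv X r \<and> ic X (blockprod X f r) = cl X r}"

definition ES :: "nat set \<Rightarrow> bfun \<Rightarrow> (nat \<times> nat) set set" where
  "ES X f = {r \<in> EW X f. ic (qset X r) (quot X f r) = ic X f}"

definition convenient :: "(nat set \<Rightarrow> bfun set) \<Rightarrow> bool" where
  "convenient B \<longleftrightarrow>
     (\<forall>X. finite X \<longrightarrow> B X \<subseteq> Bool X) \<and>
     (\<forall>X Y \<sigma> f. finite X \<longrightarrow> bij_betw \<sigma> X Y \<longrightarrow> f \<in> B X \<longrightarrow> transport X \<sigma> Y f \<in> B Y) \<and>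
     (\<lambda>_. 0) \<in> B {} \<and>
     (\<forall>X Y f g. finite X \<longrightarrow> finite Y \<longrightarrow> X \<inter> Y = {} \<longrightarrow> f \<in> B X \<longrightarrow> g \<in> B Y
        \<longrightarrow> star1 X f Y g \<in> B (X \<union> Y)) \<and>
     (\<forall>X Y f. finite X \<longrightarrow> Y \<subseteq> X \<longrightarrow> f \<in> B X \<longrightarrow> restr f Y \<in> B Y) \<and>
     (\<forall>X f r. finite X \<longrightarrow> f \<in> B X \<longrightarrow> r \<in> EW X f \<longrightarrow> quot X f r \<in> B (qset X r)) \<and>
     (\<forall>X f. finite X \<longrightarrow> f \<in> B X \<longrightarrow> EW X f = ES X f)"

end

theory Submission
  imports Defs
begin

(*
  Bool_max is the closure of the union of all convenient subspecies under star1 and its unit.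
  Bijections and restrictions commute with star1, so closure under them is inherited; the work
  lies in showing that star1 preserves the two axioms about E^W.

  The indecomposable components of g are the atoms of the Boolean algebra of separators of g,
  the sets Z with g A = g (A \<inter> Z) + g (A - Z). For f on X and g on Y, the components of
  f star1 g are those of f together with those of g, so ic is additive. An equivalence r lies in
  E^W(h) exactly when r is the component relation of the block product h | r. For h = f star1 g
  the set X separates that block product, so r relates no point of X to a point of Y and splits
  into equivalences in E^W(f) and E^W(g); the quotient of f star1 g by r is then the star1
  product of the two quotients, and additivity of ic transfers E^W = E^S from the factors to
  the product.
*)

section \<open>Equivalence relations\<close>

lemma finite_quotient_equiv: "finite X \<Longrightarrow> equiv X r \<Longrightarrow> finite (X//r)"
  using finite_quotient equiv_type by blast

lemma pairwise_disjnt_quotient: "equiv X r \<Longrightarrow> pairwise disjnt (X//r)"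
  unfolding pairwise_def disjnt_def using quotient_disj by blast

lemma equiv_restrict: "equiv X r \<Longrightarrow> Y \<subseteq> X \<Longrightarrow> equiv Y (r \<inter> Y \<times> Y)"
  unfolding equiv_def refl_on_def sym_def trans_def by blast

lemma equiv_eq_if_card_quotient_eq:
  assumes "finite X" "equiv X R" "equiv X S" "R \<subseteq> S" "card (X//S) = card (X//R)"
  shows "R = S"
proof
  have inj: "inj_on (\<lambda>C. S `` C) (X//R)"
  proof (rule eq_card_imp_inj_on)
    show "finite (X//R)" using assms(1,2) by (rule finite_quotient_equiv)
    show "card ((\<lambda>C. S `` C) ` (X//R)) = card (X//R)"
      using refines_equiv_image_eq[OF assms(4,2,3)] assms(5) by simp
  qed
  show "S \<subseteq> R"
  proof (rule subrelI)
    fix x y assume "(x, y) \<in> S"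
    then have x: "x \<in> X" and y: "y \<in> X" and "S `` {x} = S `` {y}"
      using equiv_type[OF assms(3)] eq_equiv_class_iff[OF assms(3)] by blast+
    then have "S `` (R `` {x}) = S `` (R `` {y})"
      using refines_equiv_class_eq2[OF assms(4,2,3)] by simp
    then have "R `` {x} = R `` {y}" using inj_onD[OF inj _ quotientI[OF x] quotientI[OF y]] by blast
    then show "(x, y) \<in> R" using eq_equiv_class_iff[OF assms(2) x y] by blast
  qed
qed (rule assms(4))

lemma quotient_Un:
  assumes "r1 \<subseteq> X1 \<times> X1" "r2 \<subseteq> X2 \<times> X2" "X1 \<inter> X2 = {}"
  shows "(X1 \<union> X2) // (r1 \<union> r2) = X1//r1 \<union> X2//r2"
proof -
  have "(r1 \<union> r2) `` {x} = r1 `` {x}" if "x \<in> X1" for x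
    using assms that by blast
  moreover have "(r1 \<union> r2) `` {x} = r2 `` {x}" if "x \<in> X2" for x
    using assms that by blast
  moreover have "(X1 \<union> X2) // (r1 \<union> r2) = (\<Union>x\<in>X1. {(r1 \<union> r2) `` {x}}) \<union> (\<Union>x\<in>X2. {(r1 \<union> r2) `` {x}})"
    unfolding quotient_def by (rule UN_Un)
  ultimately show ?thesis unfolding quotient_def by simp
qed

lemma quotient_disjoint:
  assumes "equiv X1 r1" "equiv X2 r2" "X1 \<inter> X2 = {}"
  shows "X1//r1 \<inter> X2//r2 = {}"
proof -
  have "Y = {}" if "Y \<in> X1//r1" "Y \<in> X2//r2" for Y
    using in_quotient_imp_subset[OF assms(1) that(1)] in_quotient_imp_subset[OF assms(2) that(2)]
      assms(3) by blast
  then show ?thesis using in_quotient_imp_non_empty[OF assms(1)] by blast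
qed

lemma sum_quotient_Un:
  assumes "finite X1" "finite X2" "equiv X1 r1" "equiv X2 r2" "X1 \<inter> X2 = {}"
  shows "(\<Sum>Y\<in>(X1 \<union> X2) // (r1 \<union> r2). h Y) = (\<Sum>Y\<in>X1//r1. h Y) + (\<Sum>Y\<in>X2//r2. h Y)"
  unfolding quotient_Un[OF equiv_type[OF assms(3)] equiv_type[OF assms(4)] assms(5)]
  by (rule sum.union_disjoint[OF finite_quotient_equiv[OF assms(1,3)] finite_quotient_equiv[OF assms(2,4)]
        quotient_disjoint[OF assms(3-5)]])

lemma card_quotient_Un:
  assumes "finite X1" "finite X2" "equiv X1 r1" "equiv X2 r2" "X1 \<inter> X2 = {}"
  shows "card ((X1 \<union> X2) // (r1 \<union> r2)) = card (X1//r1) + card (X2//r2)"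
  using sum_quotient_Un[OF assms, of "\<lambda>_. 1::nat"] by simp

lemma Bool_empty: "f \<in> Bool X \<Longrightarrow> f {} = 0"
  unfolding Bool_def by blast

lemma restr_Bool: "g {} = 0 \<Longrightarrow> restr g Y \<in> Bool Y"
  unfolding Bool_def restr_def by auto

lemma blockprod_Bool: "f {} = 0 \<Longrightarrow> blockprod X f r \<in> Bool X"
  unfolding Bool_def blockprod_def by auto

lemma quot_Bool: "f {} = 0 \<Longrightarrow> quot X f r \<in> Bool (qset X r)"
  unfolding Bool_def quot_def by simp

lemma star1_Bool: "f1 \<in> Bool X1 \<Longrightarrow> f2 \<in> Bool X2 \<Longrightarrow> star1 X1 f1 X2 f2 \<in> Bool (X1 \<union> X2)"
  unfolding Bool_def star1_def by auto

lemma star1_commute: "star1 X1 f1 X2 f2 = star1 X2 f2 X1 f1"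
  unfolding star1_def by (auto simp: fun_eq_iff Un_commute add.commute)

lemma star1_eq_left:
  assumes "X1 \<inter> X2 = {}" "f2 \<in> Bool X2" "B \<subseteq> X1"
  shows "star1 X1 f1 X2 f2 B = f1 B"
proof -
  have "B \<inter> X1 = B" "B \<inter> X2 = {}" using assms by auto
  then show ?thesis using assms unfolding star1_def by (auto simp: Bool_def)
qed

lemma star1_eq_right:
  assumes "X1 \<inter> X2 = {}" "f1 \<in> Bool X1" "B \<subseteq> X2"
  shows "star1 X1 f1 X2 f2 B = f2 B"
  using star1_eq_left[of X2 X1 f1 B f2] assms by (simp add: star1_commute Int_commute)

lemma restr_star1:
  assumes "Y \<subseteq> X1 \<union> X2"
  shows "restr (star1 X1 f1 X2 f2) Y
       = star1 (Y \<inter> X1) (restr f1 (Y \<inter> X1)) (Y \<inter> X2) (restr f2 (Y \<inter> X2))"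
proof
  fix B
  have "Y \<inter> X1 \<union> Y \<inter> X2 = Y" using assms by blast
  moreover have "B \<inter> (Y \<inter> X1) = B \<inter> X1" "B \<inter> (Y \<inter> X2) = B \<inter> X2" "B \<inter> X1 \<subseteq> Y" "B \<inter> X2 \<subseteq> Y"
    "B \<subseteq> X1 \<union> X2" if "B \<subseteq> Y" using that assms by auto
  ultimately show "restr (star1 X1 f1 X2 f2) Y B
      = star1 (Y \<inter> X1) (restr f1 (Y \<inter> X1)) (Y \<inter> X2) (restr f2 (Y \<inter> X2)) B"
    unfolding restr_def star1_def by auto
qed

lemma transport_star1:
  "transport (X1 \<union> X2) \<sigma> (\<sigma> ` X1 \<union> \<sigma> ` X2) (star1 X1 f1 X2 f2)
   = star1 (\<sigma> ` X1) (transport X1 \<sigma> (\<sigma> ` X1) f1) (\<sigma> ` X2) (transport X2 \<sigma> (\<sigma> ` X2) f2)"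
proof
  fix B
  have "{x \<in> X1 \<union> X2. \<sigma> x \<in> B} \<inter> X1 = {x \<in> X1. \<sigma> x \<in> B \<inter> \<sigma> ` X1}"
    "{x \<in> X1 \<union> X2. \<sigma> x \<in> B} \<inter> X2 = {x \<in> X2. \<sigma> x \<in> B \<inter> \<sigma> ` X2}" by blast+
  then show "transport (X1 \<union> X2) \<sigma> (\<sigma> ` X1 \<union> \<sigma> ` X2) (star1 X1 f1 X2 f2) B
      = star1 (\<sigma> ` X1) (transport X1 \<sigma> (\<sigma> ` X1) f1) (\<sigma> ` X2) (transport X2 \<sigma> (\<sigma> ` X2) f2) B"
    unfolding transport_def star1_def by auto
qed

section \<open>Separators and indecomposable components\<close>

definition separator :: "nat set \<Rightarrow> bfun \<Rightarrow> nat set \<Rightarrow> bool" where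
  "separator X g Z \<longleftrightarrow> (\<forall>A \<subseteq> X. g A = g (A \<inter> Z) + g (A - Z))"

lemma separator_whole: "g {} = 0 \<Longrightarrow> separator X g X"
  unfolding separator_def by (metis Diff_eq_empty_iff Int_absorb2 add_0_right)

lemma separator_Diff:
  assumes "separator X g Z"
  shows "separator X g (X - Z)"
  unfolding separator_def
proof (intro allI impI)
  fix A assume "A \<subseteq> X"
  moreover have "A \<inter> (X - Z) = A - Z" "A - (X - Z) = A \<inter> Z" using \<open>A \<subseteq> X\<close> by auto
  ultimately show "g A = g (A \<inter> (X - Z)) + g (A - (X - Z))"
    using assms unfolding separator_def by simp
qed

lemma separator_Int:
  assumes Z: "separator X g Z" and Z': "separator X g Z'"
  shows "separator X g (Z \<inter> Z')"
  unfolding separator_def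
proof (intro allI impI)
  fix A assume A: "A \<subseteq> X"
  have "g A = g (A \<inter> Z') + g (A - Z')"
    using Z' A unfolding separator_def by blast
  moreover have "g (A \<inter> Z') = g (A \<inter> Z' \<inter> Z) + g (A \<inter> Z' - Z)"
    using Z A unfolding separator_def by blast
  moreover have "g (A - Z \<inter> Z') = g ((A - Z \<inter> Z') \<inter> Z') + g ((A - Z \<inter> Z') - Z')"
    using Z' A unfolding separator_def by blast
  moreover have "A \<inter> Z' \<inter> Z = A \<inter> (Z \<inter> Z')" "(A - Z \<inter> Z') \<inter> Z' = A \<inter> Z' - Z"
    "(A - Z \<inter> Z') - Z' = A - Z'" by auto
  ultimately show "g A = g (A \<inter> (Z \<inter> Z')) + g (A - Z \<inter> Z')" by simp
qed

lemma separator_Inter: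
  assumes "finite F" "\<forall>Z\<in>F. separator X g Z" "g {} = 0"
  shows "separator X g (X \<inter> \<Inter>F)"
  using assms
proof (induction F rule: finite_induct)
  case empty then show ?case by (simp add: separator_whole)
next
  case (insert Z F)
  then show ?case using separator_Int[of X g Z "X \<inter> \<Inter>F"] by (simp add: Int_left_commute)
qed

lemma separator_trans:
  assumes Y: "separator X g Y" and W: "separator Y g W" and "W \<subseteq> Y" "Y \<subseteq> X"
  shows "separator X g W"
  unfolding separator_def
proof (intro allI impI)
  fix A assume A: "A \<subseteq> X"
  have "g A = g (A \<inter> Y) + g (A - Y)" using Y A unfolding separator_def by blast
  moreover have "g (A \<inter> Y) = g (A \<inter> Y \<inter> W) + g (A \<inter> Y - W)"
    using W unfolding separator_def by blast
  moreover have "g (A - W) = g ((A - W) \<inter> Y) + g (A - W - Y)"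
    using Y A unfolding separator_def by blast
  moreover have "A \<inter> Y \<inter> W = A \<inter> W" "(A - W) \<inter> Y = A \<inter> Y - W" "A - W - Y = A - Y"
    using \<open>W \<subseteq> Y\<close> by auto
  ultimately show "g A = g (A \<inter> W) + g (A - W)" by simp
qed

definition component_rel :: "nat set \<Rightarrow> bfun \<Rightarrow> (nat \<times> nat) set" where
  "component_rel X g =
     {(x, y). x \<in> X \<and> y \<in> X \<and> (\<forall>Z \<subseteq> X. separator X g Z \<longrightarrow> (x \<in> Z \<longleftrightarrow> y \<in> Z))}"

lemma component_rel_subset: "component_rel X g \<subseteq> X \<times> X"
  unfolding component_rel_def by blast

lemma component_rel_separator:
  "(x, y) \<in> component_rel X g \<Longrightarrow> Z \<subseteq> X \<Longrightarrow> separator X g Z \<Longrightarrow> x \<in> Z \<longleftrightarrow> y \<in> Z"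
  unfolding component_rel_def by blast

lemma equiv_component_rel: "equiv X (component_rel X g)"
  by (rule equivI) (auto simp: component_rel_def refl_on_def sym_def trans_def)

lemma component_rel_class:
  assumes "x \<in> X"
  shows "component_rel X g `` {x} = X \<inter> \<Inter>{Z. Z \<subseteq> X \<and> separator X g Z \<and> x \<in> Z}"
proof (intro equalityI subsetI)
  fix y assume "y \<in> component_rel X g `` {x}"
  then show "y \<in> X \<inter> \<Inter>{Z. Z \<subseteq> X \<and> separator X g Z \<and> x \<in> Z}"
    using component_rel_subset component_rel_separator by blast
next
  fix y assume y: "y \<in> X \<inter> \<Inter>{Z. Z \<subseteq> X \<and> separator X g Z \<and> x \<in> Z}"
  have "x \<in> Z \<longleftrightarrow> y \<in> Z" if "Z \<subseteq> X" "separator X g Z" for Z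
  proof
    assume "y \<in> Z"
    show "x \<in> Z"
    proof (rule ccontr)
      assume "x \<notin> Z"
      then have "y \<in> X - Z" using y assms separator_Diff[OF that(2)] by blast
      then show False using \<open>y \<in> Z\<close> by blast
    qed
  qed (use y that in blast)
  then show "y \<in> component_rel X g `` {x}"
    using assms y unfolding component_rel_def by blast
qed

lemma separator_component_class:
  assumes "finite X" "g {} = 0" "x \<in> X"
  shows "separator X g (component_rel X g `` {x})"
proof -
  have "finite {Z. Z \<subseteq> X \<and> separator X g Z \<and> x \<in> Z}"
    by (rule finite_subset[of _ "Pow X"]) (use assms(1) in auto)
  then show ?thesis
    unfolding component_rel_class[OF assms(3)] by (rule separator_Inter) (use assms(2) in auto)
qed

definition decomposes :: "nat set \<Rightarrow> bfun \<Rightarrow> (nat \<times> nat) set \<Rightarrow> bool" where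
  "decomposes X g r \<longleftrightarrow> (\<forall>A \<subseteq> X. g A = (\<Sum>Y\<in>X//r. g (A \<inter> Y)))"

lemma separator_Union_sum:
  assumes "finite P" "\<forall>Y\<in>P. separator X g Y" "pairwise disjnt P" "A \<subseteq> X" "g {} = 0"
  shows "g (A \<inter> \<Union>P) = (\<Sum>Y\<in>P. g (A \<inter> Y))"
  using assms
proof (induction P rule: finite_induct)
  case empty
  then show ?case by simp
next
  case (insert Y P)
  have "g (A \<inter> \<Union>(insert Y P)) = g (A \<inter> \<Union>(insert Y P) \<inter> Y) + g (A \<inter> \<Union>(insert Y P) - Y)"
    using insert.prems unfolding separator_def by blast
  moreover have "A \<inter> \<Union>(insert Y P) \<inter> Y = A \<inter> Y" by blast
  moreover have "A \<inter> \<Union>(insert Y P) - Y = A \<inter> \<Union>P"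
    using insert.hyps(2) insert.prems(2) by (auto simp: pairwise_insert disjnt_def)
  ultimately show ?case using insert by (simp add: pairwise_insert)
qed

lemma decomposes_if_separators:
  assumes "finite X" "equiv X r" "\<forall>Y\<in>X//r. separator X g Y" "g {} = 0"
  shows "decomposes X g r"
  unfolding decomposes_def
proof (intro allI impI)
  fix A assume A: "A \<subseteq> X"
  then have "g A = g (A \<inter> \<Union>(X//r))" using Union_quotient[OF assms(2)] by (simp add: Int_absorb2)
  also have "\<dots> = (\<Sum>Y\<in>X//r. g (A \<inter> Y))"
    using separator_Union_sum[OF finite_quotient_equiv[OF assms(1,2)] assms(3)
        pairwise_disjnt_quotient[OF assms(2)] A assms(4)] .
  finally show "g A = (\<Sum>Y\<in>X//r. g (A \<inter> Y))" .
qed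

lemma separator_if_decomposes:
  assumes "finite X" "equiv X r" "decomposes X g r" "Z \<in> X//r" "g {} = 0"
  shows "separator X g Z"
  unfolding separator_def
proof (intro allI impI)
  fix A assume A: "A \<subseteq> X"
  let ?rest = "\<lambda>B. \<Sum>Y\<in>X//r - {Z}. g (B \<inter> Y)"
  have split: "g B = g (B \<inter> Z) + ?rest B" if "B \<subseteq> X" for B
    using assms(3) that sum.remove[OF finite_quotient_equiv[OF assms(1,2)] assms(4)]
    unfolding decomposes_def by simp
  have "?rest (A - Z) = ?rest A"
  proof (rule sum.cong)
    fix Y assume "Y \<in> X//r - {Z}"
    then have "Y \<inter> Z = {}" using quotient_disj[OF assms(2) _ assms(4)] by blast
    then have "(A - Z) \<inter> Y = A \<inter> Y" by blast
    then show "g ((A - Z) \<inter> Y) = g (A \<inter> Y)" by simp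
  qed simp
  moreover have "g (A - Z) = g ((A - Z) \<inter> Z) + ?rest (A - Z)" using A by (intro split) blast
  moreover have "(A - Z) \<inter> Z = {}" by blast
  ultimately show "g A = g (A \<inter> Z) + g (A - Z)" using split[OF A] assms(5) by simp
qed

lemma component_rel_subset_if_decomposes:
  assumes "finite X" "g {} = 0" "equiv X r" "decomposes X g r"
  shows "component_rel X g \<subseteq> r"
proof (rule subrelI)
  fix x y assume xy: "(x, y) \<in> component_rel X g"
  then have x: "x \<in> X" using component_rel_subset by blast
  have "separator X g (r `` {x})"
    by (rule separator_if_decomposes[OF assms(1,3,4) quotientI[OF x] assms(2)])
  moreover have "r `` {x} \<subseteq> X" by (rule in_quotient_imp_subset[OF assms(3) quotientI[OF x]])
  moreover have "x \<in> r `` {x}" by (rule equiv_class_self[OF assms(3) x])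
  ultimately show "(x, y) \<in> r" using component_rel_separator[OF xy] by blast
qed

lemma restr_eq_star1_if_separator:
  assumes "separator X g W" "W \<subseteq> Y" "Y \<subseteq> X"
  shows "restr g Y = star1 (Y - W) (restr g (Y - W)) W (restr g W)"
proof
  fix B
  have "Y - W \<union> W = Y" using assms(2) by blast
  moreover have "g B = g (B \<inter> W) + g (B - W)" "B \<inter> (Y - W) = B - W" if "B \<subseteq> Y"
    using assms that unfolding separator_def by auto
  ultimately show "restr g Y B = star1 (Y - W) (restr g (Y - W)) W (restr g W) B"
    unfolding restr_def star1_def by auto
qed

lemma separator_if_restr_eq_star1:
  assumes "W \<subseteq> Y" "f' \<in> Bool (Y - W)" "f'' \<in> Bool W"
    and g: "restr g Y = star1 (Y - W) f' W f''"
  shows "separator Y g W"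
  unfolding separator_def
proof (intro allI impI)
  fix B assume B: "B \<subseteq> Y"
  have eval: "g C = f' (C \<inter> (Y - W)) + f'' (C \<inter> W)" if "C \<subseteq> Y" for C
    using fun_cong[OF g, of C] that assms(1) by (simp add: restr_def star1_def Un_absorb2)
  have "f' {} = 0" "f'' {} = 0" using assms(2,3) by (simp_all add: Bool_empty)
  moreover have "B \<inter> W \<inter> (Y - W) = {}" "B \<inter> W \<inter> W = B \<inter> W"
    "(B - W) \<inter> (Y - W) = B \<inter> (Y - W)" "(B - W) \<inter> W = {}" by auto
  moreover have "B \<inter> W \<subseteq> Y" "B - W \<subseteq> Y" using B by auto
  ultimately show "g B = g (B \<inter> W) + g (B - W)"
    using eval[OF B] eval[of "B \<inter> W"] eval[of "B - W"] by simp
qed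

lemma indecomposable_component:
  assumes "finite X" "g {} = 0" and Y: "Y \<in> X // component_rel X g"
  shows "indecomposable Y (restr g Y)"
proof -
  obtain x where x: "x \<in> X" "Y = component_rel X g `` {x}" using Y by (rule quotientE)
  then have "x \<in> Y" using equiv_class_self[OF equiv_component_rel] by blast
  have Ysep: "separator X g Y" using separator_component_class[of X g x] assms x by simp
  have YX: "Y \<subseteq> X" by (rule in_quotient_imp_subset[OF equiv_component_rel Y])
  have "W = {} \<or> W = Y"
    if WY: "W \<subseteq> Y" and "\<exists>f'\<in>Bool (Y - W). \<exists>f''\<in>Bool W. restr g Y = star1 (Y - W) f' W f''"
    for W
  proof -
    have Wsep: "separator X g W"
      using that separator_if_restr_eq_star1 separator_trans[OF Ysep _ WY YX] by blast
    have "Y \<subseteq> W" if "w \<in> W" for w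
    proof
      fix y assume "y \<in> Y"
      then have "(x, w) \<in> component_rel X g" "(x, y) \<in> component_rel X g" using that WY x(2) by auto
      then show "y \<in> W" using component_rel_separator[OF _ _ Wsep] WY YX that by blast
    qed
    then show ?thesis using WY by blast
  qed
  then show ?thesis unfolding indecomposable_def using \<open>x \<in> Y\<close> by blast
qed

lemma component_rel_unique:
  assumes "finite X" "g {} = 0" "equiv X r" "decomposes X g r"
    and indec: "\<forall>Y\<in>X//r. indecomposable Y (restr g Y)"
  shows "r = component_rel X g"
proof
  show "component_rel X g \<subseteq> r"
    by (rule component_rel_subset_if_decomposes[OF assms(1) _ assms(3,4)]) (rule assms(2))
  show "r \<subseteq> component_rel X g"
  proof (rule subrelI)
    fix x y assume xy: "(x, y) \<in> r"
    then have x: "x \<in> X" and y: "y \<in> X" using equiv_type[OF assms(3)] by auto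
    define Y where "Y = r `` {x}"
    have Y: "Y \<in> X//r" unfolding Y_def using x by (rule quotientI)
    have YX: "Y \<subseteq> X" by (rule in_quotient_imp_subset[OF assms(3) Y])
    have xyY: "x \<in> Y" "y \<in> Y" using equiv_class_self[OF assms(3) x] xy Y_def by auto
    have "x \<in> Z \<longleftrightarrow> y \<in> Z" if "Z \<subseteq> X" "separator X g Z" for Z
    proof -
      have "separator X g Y"
        by (rule separator_if_decomposes[OF assms(1,3,4) Y]) (rule assms(2))
      then have "separator X g (Y \<inter> Z)" using separator_Int that(2) by blast
      then have "restr g Y = star1 (Y - Y \<inter> Z) (restr g (Y - Y \<inter> Z)) (Y \<inter> Z) (restr g (Y \<inter> Z))"
        using restr_eq_star1_if_separator YX by blast
      moreover have "restr g (Y - Y \<inter> Z) \<in> Bool (Y - Y \<inter> Z)" "restr g (Y \<inter> Z) \<in> Bool (Y \<inter> Z)"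
        using restr_Bool[of g] assms(2) by blast+
      moreover have "indecomposable Y (restr g Y)" using indec Y by blast
      ultimately have "Y \<inter> Z = {} \<or> Y \<inter> Z = Y" unfolding indecomposable_def by blast
      then show ?thesis using xyY by blast
    qed
    then show "(x, y) \<in> component_rel X g" using x y unfolding component_rel_def by blast
  qed
qed

lemma ic_rel_eq_component_rel:
  assumes "finite X" "g {} = 0"
  shows "ic_rel X g = component_rel X g"
  unfolding ic_rel_def decomposes_def[symmetric]
proof (rule the_equality)
  have "\<forall>Y\<in>X // component_rel X g. separator X g Y"
    using separator_component_class[of X g] assms by (auto elim: quotientE)
  then have "decomposes X g (component_rel X g)"
    using decomposes_if_separators[of X "component_rel X g" g] assms equiv_component_rel by blast
  then show "equiv X (component_rel X g) \<and> decomposes X g (component_rel X g) \<and>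
      (\<forall>Y\<in>X // component_rel X g. indecomposable Y (restr g Y))"
    using equiv_component_rel indecomposable_component[of X g] assms by blast
next
  fix r assume "equiv X r \<and> decomposes X g r \<and> (\<forall>Y\<in>X // r. indecomposable Y (restr g Y))"
  then show "r = component_rel X g" using component_rel_unique[of X g r] assms by blast
qed

lemma ic_eq_card_component_rel:
  "finite X \<Longrightarrow> g {} = 0 \<Longrightarrow> ic X g = card (X // component_rel X g)"
  unfolding ic_def by (simp add: ic_rel_eq_component_rel)

section \<open>Components of a product\<close>

lemma separator_star1:
  assumes "X1 \<inter> X2 = {}" "f1 \<in> Bool X1" "f2 \<in> Bool X2"
  shows "separator (X1 \<union> X2) (star1 X1 f1 X2 f2) X1"
  unfolding separator_def
proof (intro allI impI)
  fix A assume "A \<subseteq> X1 \<union> X2"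
  moreover have "A \<inter> X1 \<inter> X2 = {}" "(A - X1) \<inter> X1 = {}" using assms(1) by auto
  moreover have "(A - X1) \<inter> X2 = A \<inter> X2" using assms(1) by auto
  ultimately show "star1 X1 f1 X2 f2 A = star1 X1 f1 X2 f2 (A \<inter> X1) + star1 X1 f1 X2 f2 (A - X1)"
    using assms(2,3) unfolding star1_def Bool_def by auto
qed

lemma separator_star1_extend:
  assumes "separator X1 f1 Z" "Z \<subseteq> X1" "X1 \<inter> X2 = {}" "f2 \<in> Bool X2"
  shows "separator (X1 \<union> X2) (star1 X1 f1 X2 f2) Z"
  unfolding separator_def
proof (intro allI impI)
  fix A assume A: "A \<subseteq> X1 \<union> X2"
  have "f1 (A \<inter> X1) = f1 (A \<inter> X1 \<inter> Z) + f1 (A \<inter> X1 - Z)"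
    using assms(1) unfolding separator_def by blast
  moreover have "A \<inter> Z \<inter> X1 = A \<inter> X1 \<inter> Z" "A \<inter> Z \<inter> X2 = {}"
    "(A - Z) \<inter> X1 = A \<inter> X1 - Z" "(A - Z) \<inter> X2 = A \<inter> X2"
    using assms(2,3) by auto
  ultimately show "star1 X1 f1 X2 f2 A = star1 X1 f1 X2 f2 (A \<inter> Z) + star1 X1 f1 X2 f2 (A - Z)"
    using A assms(4) unfolding star1_def Bool_def by auto
qed

lemma separator_star1_restrict:
  assumes "separator (X1 \<union> X2) (star1 X1 f1 X2 f2) Z" "X1 \<inter> X2 = {}" "f2 \<in> Bool X2"
  shows "separator X1 f1 (X1 \<inter> Z)"
  unfolding separator_def
proof (intro allI impI)
  fix A assume A: "A \<subseteq> X1"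
  then have "A \<inter> (X1 \<inter> Z) = A \<inter> Z" "A \<inter> Z \<subseteq> X1" "A - X1 \<inter> Z = A - Z" "A - Z \<subseteq> X1" by auto
  then show "f1 A = f1 (A \<inter> (X1 \<inter> Z)) + f1 (A - X1 \<inter> Z)"
    using assms A star1_eq_left[OF assms(2,3)] unfolding separator_def by (metis le_supI1)
qed

lemma component_rel_star1_restrict:
  assumes "X1 \<inter> X2 = {}" "f2 \<in> Bool X2"
  shows "component_rel (X1 \<union> X2) (star1 X1 f1 X2 f2) \<inter> X1 \<times> X1 = component_rel X1 f1"
proof (intro equalityI subrelI)
  fix x y assume xy: "(x, y) \<in> component_rel (X1 \<union> X2) (star1 X1 f1 X2 f2) \<inter> X1 \<times> X1"
  have "x \<in> Z \<longleftrightarrow> y \<in> Z" if "Z \<subseteq> X1" "separator X1 f1 Z" for Z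
    using xy component_rel_separator separator_star1_extend[OF that(2,1) assms] that(1) by blast
  then show "(x, y) \<in> component_rel X1 f1" using xy unfolding component_rel_def by blast
next
  fix x y assume xy: "(x, y) \<in> component_rel X1 f1"
  have "x \<in> Z \<longleftrightarrow> y \<in> Z" if "Z \<subseteq> X1 \<union> X2" "separator (X1 \<union> X2) (star1 X1 f1 X2 f2) Z" for Z
    using component_rel_separator[OF xy _ separator_star1_restrict[OF that(2) assms]]
      component_rel_subset[of X1 f1] xy by blast
  then show "(x, y) \<in> component_rel (X1 \<union> X2) (star1 X1 f1 X2 f2) \<inter> X1 \<times> X1"
    using xy component_rel_subset[of X1 f1] unfolding component_rel_def by blast
qed

lemma component_rel_star1:
  assumes "X1 \<inter> X2 = {}" "f1 \<in> Bool X1" "f2 \<in> Bool X2"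
  shows "component_rel (X1 \<union> X2) (star1 X1 f1 X2 f2) = component_rel X1 f1 \<union> component_rel X2 f2"
proof -
  let ?S = "star1 X1 f1 X2 f2"
  have "x \<in> X1 \<longleftrightarrow> y \<in> X1" if "(x, y) \<in> component_rel (X1 \<union> X2) ?S" for x y
    using component_rel_separator[OF that _ separator_star1[OF assms]] by blast
  then have "component_rel (X1 \<union> X2) ?S
      = component_rel (X1 \<union> X2) ?S \<inter> X1 \<times> X1 \<union> component_rel (X1 \<union> X2) ?S \<inter> X2 \<times> X2"
    using component_rel_subset[of "X1 \<union> X2" ?S] by blast
  moreover have "component_rel (X1 \<union> X2) ?S \<inter> X1 \<times> X1 = component_rel X1 f1"
    using component_rel_star1_restrict assms by blast
  moreover have "component_rel (X1 \<union> X2) ?S \<inter> X2 \<times> X2 = component_rel X2 f2"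
    using component_rel_star1_restrict[of X2 X1 f1 f2] assms
    unfolding star1_commute[of X1 f1 X2 f2] by (simp add: Un_commute Int_commute)
  ultimately show ?thesis by simp
qed

lemma ic_star1:
  assumes "finite X1" "finite X2" "X1 \<inter> X2 = {}" "f1 \<in> Bool X1" "f2 \<in> Bool X2"
  shows "ic (X1 \<union> X2) (star1 X1 f1 X2 f2) = ic X1 f1 + ic X2 f2"
proof -
  have "star1 X1 f1 X2 f2 {} = 0" by (rule Bool_empty[OF star1_Bool[OF assms(4,5)]])
  then show ?thesis
    using ic_eq_card_component_rel[of "X1 \<union> X2" "star1 X1 f1 X2 f2"] assms
      ic_eq_card_component_rel[of X1 f1] ic_eq_card_component_rel[of X2 f2] Bool_empty
      card_quotient_Un[OF assms(1,2) equiv_component_rel equiv_component_rel assms(3)]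
    by (simp add: component_rel_star1)
qed

section \<open>Weak equivalences of a product\<close>

lemma decomposes_blockprod:
  assumes "finite X" "equiv X r" "f {} = 0"
  shows "decomposes X (blockprod X f r) r"
  unfolding decomposes_def
proof (intro allI impI)
  fix A assume A: "A \<subseteq> X"
  have "blockprod X f r (A \<inter> Y) = f (A \<inter> Y)" if Y: "Y \<in> X//r" for Y
  proof -
    have "f (A \<inter> Y \<inter> Y') = (if Y' = Y then f (A \<inter> Y) else 0)" if "Y' \<in> X//r" for Y'
      using quotient_disj[OF assms(2) Y that] assms(3) by (auto simp: Int_assoc)
    moreover have "A \<inter> Y \<subseteq> X" using A by blast
    ultimately show ?thesis
      unfolding blockprod_def using Y finite_quotient_equiv[OF assms(1,2)] by simp
  qed
  then show "blockprod X f r A = (\<Sum>Y\<in>X//r. blockprod X f r (A \<inter> Y))"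
    unfolding blockprod_def using A by simp
qed

lemma EW_iff:
  assumes "finite X" "f {} = 0"
  shows "r \<in> EW X f \<longleftrightarrow> equiv X r \<and> component_rel X (blockprod X f r) = r"
proof (cases "equiv X r")
  case True
  define h where "h = blockprod X f r"
  have h0: "h {} = 0" unfolding h_def blockprod_def using assms(2) by simp
  have "component_rel X h \<subseteq> r"
    using component_rel_subset_if_decomposes[of X h r] decomposes_blockprod[of X r f]
      assms h0 True unfolding h_def by blast
  then have "cl X r = ic X h \<longleftrightarrow> component_rel X h = r"
    using equiv_eq_if_card_quotient_eq[OF assms(1) equiv_component_rel True]
    unfolding cl_def ic_eq_card_component_rel[of X h, OF assms(1) h0] by auto
  then show ?thesis using True unfolding EW_def h_def by auto
qed (simp add: EW_def)

lemma separator_blockprod: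
  assumes "separator X g Z"
  shows "separator X (blockprod X g r) Z"
  unfolding separator_def
proof (intro allI impI)
  fix A assume A: "A \<subseteq> X"
  have "g (A \<inter> Y) = g (A \<inter> Z \<inter> Y) + g ((A - Z) \<inter> Y)" for Y
  proof -
    have "A \<inter> Y \<inter> Z = A \<inter> Z \<inter> Y" "A \<inter> Y - Z = (A - Z) \<inter> Y" by auto
    then show ?thesis using assms A unfolding separator_def by (metis le_infI1)
  qed
  moreover have "A \<inter> Z \<subseteq> X" "A - Z \<subseteq> X" using A by auto
  ultimately show "blockprod X g r A = blockprod X g r (A \<inter> Z) + blockprod X g r (A - Z)"
    unfolding blockprod_def using A by (simp add: sum.distrib)
qed

lemma blockprod_star1:
  assumes "finite X1" "finite X2" "X1 \<inter> X2 = {}" "f1 \<in> Bool X1" "f2 \<in> Bool X2"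
    and r1: "equiv X1 r1" and r2: "equiv X2 r2"
  shows "blockprod (X1 \<union> X2) (star1 X1 f1 X2 f2) (r1 \<union> r2)
       = star1 X1 (blockprod X1 f1 r1) X2 (blockprod X2 f2 r2)"
proof
  fix A
  let ?S = "star1 X1 f1 X2 f2"
  have "(\<Sum>Y\<in>X1//r1. ?S (A \<inter> Y)) = (\<Sum>Y\<in>X1//r1. f1 (A \<inter> X1 \<inter> Y))"
  proof (rule sum.cong)
    fix Y assume "Y \<in> X1//r1"
    then have "Y \<subseteq> X1" by (rule in_quotient_imp_subset[OF r1])
    then have "A \<inter> X1 \<inter> Y = A \<inter> Y" "A \<inter> Y \<subseteq> X1" by auto
    then show "?S (A \<inter> Y) = f1 (A \<inter> X1 \<inter> Y)"
      using star1_eq_left[of X1 X2 f2 "A \<inter> Y" f1] assms by simp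
  qed simp
  moreover have "(\<Sum>Y\<in>X2//r2. ?S (A \<inter> Y)) = (\<Sum>Y\<in>X2//r2. f2 (A \<inter> X2 \<inter> Y))"
  proof (rule sum.cong)
    fix Y assume "Y \<in> X2//r2"
    then have "Y \<subseteq> X2" by (rule in_quotient_imp_subset[OF r2])
    then have "A \<inter> X2 \<inter> Y = A \<inter> Y" "A \<inter> Y \<subseteq> X2" by auto
    then show "?S (A \<inter> Y) = f2 (A \<inter> X2 \<inter> Y)"
      using star1_eq_right[of X1 X2 f1 "A \<inter> Y" f2] assms by simp
  qed simp
  ultimately show "blockprod (X1 \<union> X2) ?S (r1 \<union> r2) A
       = star1 X1 (blockprod X1 f1 r1) X2 (blockprod X2 f2 r2) A"
    unfolding blockprod_def star1_def sum_quotient_Un[OF assms(1,2) r1 r2 assms(3)] by simp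
qed

lemma EW_star1:
  assumes fin: "finite X1" "finite X2" and disj: "X1 \<inter> X2 = {}"
    and f: "f1 \<in> Bool X1" "f2 \<in> Bool X2"
    and r: "r \<in> EW (X1 \<union> X2) (star1 X1 f1 X2 f2)"
  obtains r1 r2 where "r = r1 \<union> r2" "r1 \<in> EW X1 f1" "r2 \<in> EW X2 f2"
proof -
  let ?S = "star1 X1 f1 X2 f2"
  define r1 where "r1 = r \<inter> X1 \<times> X1"
  define r2 where "r2 = r \<inter> X2 \<times> X2"
  have S: "?S \<in> Bool (X1 \<union> X2)" by (rule star1_Bool[OF f])
  have eq: "equiv (X1 \<union> X2) r" and r_component: "component_rel (X1 \<union> X2) (blockprod (X1 \<union> X2) ?S r) = r"
    using r EW_iff[of "X1 \<union> X2" ?S r] fin Bool_empty[OF S] by auto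
  have "separator (X1 \<union> X2) (blockprod (X1 \<union> X2) ?S r) X1"
    by (rule separator_blockprod[OF separator_star1[OF disj f]])
  then have "x \<in> X1 \<longleftrightarrow> y \<in> X1" if "(x, y) \<in> r" for x y
    using component_rel_separator[of x y] r_component that by blast
  then have r12: "r = r1 \<union> r2" using equiv_type[OF eq] unfolding r1_def r2_def by blast
  have eq1: "equiv X1 r1" and eq2: "equiv X2 r2"
    unfolding r1_def r2_def using equiv_restrict[OF eq] by auto
  let ?h1 = "blockprod X1 f1 r1" and ?h2 = "blockprod X2 f2 r2"
  have h: "?h1 \<in> Bool X1" "?h2 \<in> Bool X2" using blockprod_Bool Bool_empty f by blast+
  have "r1 \<union> r2 = component_rel X1 ?h1 \<union> component_rel X2 ?h2"
    using r_component component_rel_star1[OF disj h]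
      blockprod_star1[OF fin disj f eq1 eq2] unfolding r12 by simp
  moreover have "r1 \<subseteq> X1 \<times> X1" "r2 \<subseteq> X2 \<times> X2"
    "component_rel X1 ?h1 \<subseteq> X1 \<times> X1" "component_rel X2 ?h2 \<subseteq> X2 \<times> X2"
    unfolding r1_def r2_def using component_rel_subset by blast+
  ultimately have "component_rel X1 ?h1 = r1" "component_rel X2 ?h2 = r2" using disj by blast+
  then show thesis
    using that[OF r12] EW_iff[of X1 f1 r1] EW_iff[of X2 f2 r2] fin eq1 eq2 f Bool_empty by blast
qed

lemma finite_qset: "finite X \<Longrightarrow> equiv X r \<Longrightarrow> finite (qset X r)"
  unfolding qset_def by (simp add: finite_quotient_equiv)

lemma qset_quot_empty: "qset {} r = {}" "quot {} (\<lambda>_. 0) r = (\<lambda>_. 0)"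
  unfolding qset_def quot_def by auto

lemma varpi_in_qset: "x \<in> X \<Longrightarrow> varpi r x \<in> qset X r"
  unfolding varpi_def qset_def by (intro imageI quotientI)

lemma qset_Un:
  assumes "r1 \<subseteq> X1 \<times> X1" "r2 \<subseteq> X2 \<times> X2" "X1 \<inter> X2 = {}"
  shows "qset (X1 \<union> X2) (r1 \<union> r2) = qset X1 r1 \<union> qset X2 r2"
  unfolding qset_def quotient_Un[OF assms] by (rule image_Un)

lemma qset_disjoint:
  assumes "finite X1" "finite X2" "equiv X1 r1" "equiv X2 r2" "X1 \<inter> X2 = {}"
  shows "qset X1 r1 \<inter> qset X2 r2 = {}"
proof -
  have "X1//r1 \<union> X2//r2 \<subseteq> Collect finite"
    using finite_equiv_class[OF assms(1) equiv_type[OF assms(3)]]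
      finite_equiv_class[OF assms(2) equiv_type[OF assms(4)]] by blast
  then have "inj_on set_encode (X1//r1 \<union> X2//r2)" by (rule inj_on_subset[OF inj_on_set_encode])
  then show ?thesis
    unfolding qset_def using inj_on_image_Int[of set_encode _ "X1//r1" "X2//r2"]
      quotient_disjoint[OF assms(3-5)] by auto
qed

lemma quot_star1:
  assumes disj: "X1 \<inter> X2 = {}" and r1: "equiv X1 r1" and r2: "equiv X2 r2"
  shows "quot (X1 \<union> X2) (star1 X1 f1 X2 f2) (r1 \<union> r2)
       = star1 (qset X1 r1) (quot X1 f1 r1) (qset X2 r2) (quot X2 f2 r2)"
proof
  fix A
  let ?P = "{x \<in> X1 \<union> X2. varpi (r1 \<union> r2) x \<in> A}"
  have t: "r1 \<subseteq> X1 \<times> X1" "r2 \<subseteq> X2 \<times> X2" using equiv_type r1 r2 by blast+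
  have "(r1 \<union> r2) `` {x} = r1 `` {x}" if "x \<in> X1" for x using t disj that by blast
  then have "varpi (r1 \<union> r2) x = varpi r1 x" if "x \<in> X1" for x
    unfolding varpi_def using that by simp
  then have P1: "?P \<inter> X1 = {x \<in> X1. varpi r1 x \<in> A \<inter> qset X1 r1}"
    using varpi_in_qset by auto
  have "(r1 \<union> r2) `` {x} = r2 `` {x}" if "x \<in> X2" for x using t disj that by blast
  then have "varpi (r1 \<union> r2) x = varpi r2 x" if "x \<in> X2" for x
    unfolding varpi_def using that by simp
  then have P2: "?P \<inter> X2 = {x \<in> X2. varpi r2 x \<in> A \<inter> qset X2 r2}"
    using varpi_in_qset by auto
  show "quot (X1 \<union> X2) (star1 X1 f1 X2 f2) (r1 \<union> r2) A
      = star1 (qset X1 r1) (quot X1 f1 r1) (qset X2 r2) (quot X2 f2 r2) A"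
    unfolding quot_def star1_def qset_Un[OF t disj] using P1 P2 by auto
qed

lemma quot_star1_EW:
  assumes fin: "finite X1" "finite X2" and disj: "X1 \<inter> X2 = {}"
    and f: "f1 \<in> Bool X1" "f2 \<in> Bool X2"
    and r: "r \<in> EW (X1 \<union> X2) (star1 X1 f1 X2 f2)"
  obtains r1 r2 where "r1 \<in> EW X1 f1" "r2 \<in> EW X2 f2"
    and "qset (X1 \<union> X2) r = qset X1 r1 \<union> qset X2 r2" "qset X1 r1 \<inter> qset X2 r2 = {}"
    and "quot (X1 \<union> X2) (star1 X1 f1 X2 f2) r
      = star1 (qset X1 r1) (quot X1 f1 r1) (qset X2 r2) (quot X2 f2 r2)"
proof -
  obtain r1 r2 where r12: "r = r1 \<union> r2" and EW: "r1 \<in> EW X1 f1" "r2 \<in> EW X2 f2"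
    using EW_star1[OF fin disj f r] .
  then have eq: "equiv X1 r1" "equiv X2 r2" unfolding EW_def by auto
  show thesis
  proof (rule that[OF EW])
    show "qset (X1 \<union> X2) r = qset X1 r1 \<union> qset X2 r2"
      unfolding r12 by (rule qset_Un[OF equiv_type[OF eq(1)] equiv_type[OF eq(2)] disj])
    show "qset X1 r1 \<inter> qset X2 r2 = {}" by (rule qset_disjoint[OF fin eq disj])
    show "quot (X1 \<union> X2) (star1 X1 f1 X2 f2) r
      = star1 (qset X1 r1) (quot X1 f1 r1) (qset X2 r2) (quot X2 f2 r2)"
      unfolding r12 by (rule quot_star1[OF disj eq])
  qed
qed

section \<open>The maximal convenient subspecies\<close>

lemma convenientD:
  assumes "convenient B" "finite X" "f \<in> B X"
  shows "f \<in> Bool X"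
    and "bij_betw \<sigma> X Y \<Longrightarrow> transport X \<sigma> Y f \<in> B Y"
    and "Y \<subseteq> X \<Longrightarrow> restr f Y \<in> B Y"
    and "r \<in> EW X f \<Longrightarrow> quot X f r \<in> B (qset X r)"
    and "EW X f = ES X f"
  using assms unfolding convenient_def by (simp_all add: subset_iff)

inductive Bool_max :: "nat set \<Rightarrow> bfun \<Rightarrow> bool" where
  base: "convenient B \<Longrightarrow> finite X \<Longrightarrow> f \<in> B X \<Longrightarrow> Bool_max X f"
| unit: "Bool_max {} (\<lambda>_. 0)"
| star: "Bool_max X1 f1 \<Longrightarrow> Bool_max X2 f2 \<Longrightarrow> X1 \<inter> X2 = {} \<Longrightarrow>
    Bool_max (X1 \<union> X2) (star1 X1 f1 X2 f2)"

lemma Bool_max_Bool: "Bool_max X f \<Longrightarrow> finite X \<and> f \<in> Bool X"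
proof (induction rule: Bool_max.induct)
  case (base B X f)
  then show ?case by (simp add: convenientD)
next
  case unit
  then show ?case by (simp add: Bool_def)
next
  case (star X1 f1 X2 f2)
  then show ?case by (simp add: star1_Bool)
qed

lemma Bool_max_restr: "Bool_max X f \<Longrightarrow> Y \<subseteq> X \<Longrightarrow> Bool_max Y (restr f Y)"
proof (induction arbitrary: Y rule: Bool_max.induct)
  case (base B X f)
  then have "restr f Y \<in> B Y" by (simp add: convenientD)
  then show ?case using base finite_subset by (blast intro: Bool_max.base)
next
  case unit
  then show ?case using Bool_max.unit by (simp add: restr_def)
next
  case (star X1 f1 X2 f2)
  then have "Bool_max (Y \<inter> X1 \<union> Y \<inter> X2)
      (star1 (Y \<inter> X1) (restr f1 (Y \<inter> X1)) (Y \<inter> X2) (restr f2 (Y \<inter> X2)))"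
    by (intro Bool_max.star) auto
  moreover have "Y \<inter> X1 \<union> Y \<inter> X2 = Y" using star.prems by blast
  ultimately show ?case using restr_star1[OF star.prems] by simp
qed

lemma Bool_max_transport:
  "Bool_max X f \<Longrightarrow> bij_betw \<sigma> X Y \<Longrightarrow> Bool_max Y (transport X \<sigma> Y f)"
proof (induction arbitrary: Y rule: Bool_max.induct)
  case (base B X f)
  then have "transport X \<sigma> Y f \<in> B Y" by (simp add: convenientD)
  then show ?case using base bij_betw_finite by (blast intro: Bool_max.base)
next
  case unit
  then show ?case using Bool_max.unit by (simp add: transport_def bij_betw_def)
next
  case (star X1 f1 X2 f2)
  have inj: "inj_on \<sigma> (X1 \<union> X2)" and Y: "Y = \<sigma> ` X1 \<union> \<sigma> ` X2"
    using star.prems unfolding bij_betw_def by auto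
  then have "bij_betw \<sigma> X1 (\<sigma> ` X1)" "bij_betw \<sigma> X2 (\<sigma> ` X2)" "\<sigma> ` X1 \<inter> \<sigma> ` X2 = {}"
    using star.hyps(3) inj_on_image_Int[OF inj, of X1 X2] by (auto intro: inj_on_imp_bij_betw inj_on_subset)
  then show ?case
    unfolding Y transport_star1 using star.IH by (blast intro: Bool_max.star)
qed

lemma Bool_max_EW_eq_ES: "Bool_max X f \<Longrightarrow> EW X f = ES X f"
proof (induction rule: Bool_max.induct)
  case (base B X f)
  then show ?case by (simp add: convenientD)
next
  case unit
  then show ?case unfolding ES_def by (auto simp: qset_quot_empty)
next
  case (star X1 f1 X2 f2)
  let ?S = "star1 X1 f1 X2 f2"
  have fin: "finite X1" "finite X2" and f: "f1 \<in> Bool X1" "f2 \<in> Bool X2"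
    using Bool_max_Bool star.hyps by blast+
  have "r \<in> ES (X1 \<union> X2) ?S" if r: "r \<in> EW (X1 \<union> X2) ?S" for r
  proof -
    obtain r1 r2 where EW: "r1 \<in> EW X1 f1" "r2 \<in> EW X2 f2"
      and Q: "qset (X1 \<union> X2) r = qset X1 r1 \<union> qset X2 r2"
      and disj: "qset X1 r1 \<inter> qset X2 r2 = {}"
      and q: "quot (X1 \<union> X2) ?S r = star1 (qset X1 r1) (quot X1 f1 r1) (qset X2 r2) (quot X2 f2 r2)"
      by (rule quot_star1_EW[OF fin star.hyps(3) f r])
    have eq: "equiv X1 r1" "equiv X2 r2" using EW unfolding EW_def by auto
    have "quot X1 f1 r1 \<in> Bool (qset X1 r1)" "quot X2 f2 r2 \<in> Bool (qset X2 r2)"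
      by (rule quot_Bool, rule Bool_empty, rule f)+
    then have "ic (qset (X1 \<union> X2) r) (quot (X1 \<union> X2) ?S r)
        = ic (qset X1 r1) (quot X1 f1 r1) + ic (qset X2 r2) (quot X2 f2 r2)"
      unfolding Q q by (rule ic_star1[OF finite_qset[OF fin(1) eq(1)] finite_qset[OF fin(2) eq(2)] disj])
    also have "\<dots> = ic X1 f1 + ic X2 f2"
    proof -
      have "r1 \<in> ES X1 f1" "r2 \<in> ES X2 f2" using star.IH EW by blast+
      then show ?thesis unfolding ES_def by simp
    qed
    also have "\<dots> = ic (X1 \<union> X2) ?S" using ic_star1[OF fin star.hyps(3) f] by simp
    finally show ?thesis using r unfolding ES_def by blast
  qed
  then show ?case unfolding ES_def by blast
qed

lemma Bool_max_quot: "Bool_max X f \<Longrightarrow> r \<in> EW X f \<Longrightarrow> Bool_max (qset X r) (quot X f r)"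
proof (induction arbitrary: r rule: Bool_max.induct)
  case (base B X f)
  moreover have "finite (qset X r)"
    using finite_qset base(2,4) unfolding EW_def by blast
  ultimately show ?case by (auto simp: convenientD intro: Bool_max.base)
next
  case unit
  then show ?case using Bool_max.unit by (simp add: qset_quot_empty)
next
  case (star X1 f1 X2 f2)
  have fin: "finite X1" "finite X2" and f: "f1 \<in> Bool X1" "f2 \<in> Bool X2"
    using Bool_max_Bool star.hyps by blast+
  obtain r1 r2 where "r1 \<in> EW X1 f1" "r2 \<in> EW X2 f2"
    and "qset (X1 \<union> X2) r = qset X1 r1 \<union> qset X2 r2" "qset X1 r1 \<inter> qset X2 r2 = {}"
    and "quot (X1 \<union> X2) (star1 X1 f1 X2 f2) r
      = star1 (qset X1 r1) (quot X1 f1 r1) (qset X2 r2) (quot X2 f2 r2)"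
    by (rule quot_star1_EW[OF fin star.hyps(3) f star.prems])
  then show ?case using star.IH by (simp add: Bool_max.star)
qed

theorem proposition3p24:
  shows "\<exists>Bmax. convenient Bmax \<and>
           (\<forall>Bt. convenient Bt \<longrightarrow> (\<forall>X. finite X \<longrightarrow> Bt X \<subseteq> Bmax X))"
proof (intro exI conjI allI impI)
  show "convenient (\<lambda>X. {f. Bool_max X f})"
    unfolding convenient_def
    using Bool_max_Bool Bool_max_transport Bool_max.unit Bool_max.star Bool_max_restr
      Bool_max_quot Bool_max_EW_eq_ES
    by auto
  show "Bt X \<subseteq> {f. Bool_max X f}" if "convenient Bt" "finite X" for Bt X
    using Bool_max.base that by blast
qed

end
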